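(* For $L_2>0$ define $\bar h:\mathbb{R}^{3\times3}\to\mathbb{R}$ by $\bar h(R)=g(\|R^TR-I\|_F)$ with $g(x)=L_2\sqrt{3L_2^2x^2+1}-L_2$. Then: (i) there is a polynomial $q$ such that for every $L_2>0$, $\bar h$ is $q(L_2)$-curvature bounded; (ii) $\bar h$ is twice differentiable; (iii) its second derivatives are locally Lipschitz; and (v) $g$ is monotone in $|x|$, $\min_x g(x)=0$, and $g(x)=L_2$ when $|x|=1/L_2$.
   Context: $\|\cdot\|_F$ is the Frobenius norm; $R$ is identified with a vector in $\mathbb{R}^9$. A function $\phi$ is $L$-curvature bounded if $\phi(x)+\frac L2\|x\|^2$ is convex and $\nabla\phi$ is $L$-Lipschitz. *)

theory Defs
  imports "HOL-Analysis.Analysis" "HOL-Computational_Algebra.Polynomial"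
begin

definition gfun :: "real \<Rightarrow> real \<Rightarrow> real" where
  "gfun L2 x = L2 * sqrt (3 * L2^2 * x^2 + 1) - L2"

text \<open>hbar(R) = g(||R^T R - I||_F). On real^3^3 the library norm is the Frobenius norm
  (R identified with a vector in R^9).\<close>
definition hbar :: "real \<Rightarrow> real^3^3 \<Rightarrow> real" where
  "hbar L2 R = gfun L2 (norm (transpose R ** R - mat 1))"

definition curvature_bounded :: "real \<Rightarrow> ('a::euclidean_space \<Rightarrow> real) \<Rightarrow> bool" where
  "curvature_bounded L phi \<longleftrightarrow>
     convex_on UNIV (\<lambda>x. phi x + L / 2 * norm x ^ 2) \<and>
     (\<exists>G. (\<forall>x. (phi has_derivative (\<lambda>v. G x \<bullet> v)) (at x)) \<and> L-lipschitz_on UNIV G)"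

end

theory Submission
  imports Defs
begin

text \<open>Write \<open>M = R\<^sup>T R - I\<close> and \<open>s = sqrt (3 L\<^sup>2 \<parallel>M\<parallel>\<^sup>2 + 1)\<close>, so that
  \<open>hbar L R = L s - L\<close> with gradient \<open>G = (6 L\<^sup>3 / s) R M\<close>. In the Hessian of \<open>hbar L\<close>
  the only unbounded factors are \<open>\<parallel>M\<parallel>\<close> and \<open>\<parallel>R\<parallel>\<^sup>2 \<le> 2 \<parallel>M\<parallel> + 3\<close>, and each is
  compensated by \<open>L \<parallel>M\<parallel> \<le> s\<close>, so the Hessian is bounded by \<open>100 (L\<^sup>2 + L\<^sup>3)\<close>
  uniformly in \<open>R\<close>. Hence \<open>G\<close> is globally Lipschitz, and a Lipschitz gradient gives
  curvature boundedness because \<open>G x + L x\<close> is monotone along every line. The Hessian is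
  assembled from \<open>R\<close> and \<open>1 / s\<close> by bounded bilinear operations, hence is locally
  Lipschitz.\<close>

lemma convex_on_UNIV_if_convex_on_lines:
  assumes "\<And>x d. convex_on UNIV (\<lambda>t::real. f (x + t *\<^sub>R d))"
  shows "convex_on UNIV f"
proof (rule convex_onI)
  fix t :: real and x y
  assume "0 < t" "t < 1"
  then have "f (x + t *\<^sub>R (y - x)) \<le> (1 - t) * f x + t * f y"
    using convex_onD[OF assms[of x "y - x"], of t 0 1] by simp
  moreover have "(1 - t) *\<^sub>R x + t *\<^sub>R y = x + t *\<^sub>R (y - x)"
    by (simp add: algebra_simps)
  ultimately show "f ((1 - t) *\<^sub>R x + t *\<^sub>R y) \<le> (1 - t) * f x + t * f y"
    by simp
qed simp

lemma convex_on_add_norm_sq_if_lipschitz_gradient: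
  fixes f :: "'a::real_inner \<Rightarrow> real"
  assumes f: "\<And>x. (f has_derivative (\<lambda>v. G x \<bullet> v)) (at x)" and G: "L-lipschitz_on UNIV G"
  shows "convex_on UNIV (\<lambda>x. f x + L / 2 * norm x ^ 2)"
proof (rule convex_on_UNIV_if_convex_on_lines)
  fix x d :: 'a
  define z where "z t = x + t *\<^sub>R d" for t :: real
  have z: "(z has_derivative (\<lambda>h. h *\<^sub>R d)) (at t)" for t
    unfolding z_def by (auto intro!: derivative_eq_intros)
  have deriv: "((\<lambda>t. f (z t) + L / 2 * norm (z t) ^ 2) has_real_derivative G (z t) \<bullet> d + L * (z t \<bullet> d)) (at t)" for t
    unfolding has_field_derivative_def power2_norm_eq_inner
    by (rule has_derivative_eq_rhs, (rule derivative_eq_intros has_derivative_compose[OF z f] z | simp)+)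
       (simp add: fun_eq_iff inner_commute algebra_simps)
  have mono: "G (z s) \<bullet> d + L * (z s \<bullet> d) \<le> G (z t) \<bullet> d + L * (z t \<bullet> d)" if "s \<le> t" for s t
  proof -
    have "(G (z s) - G (z t)) \<bullet> d \<le> norm (G (z s) - G (z t)) * norm d"
      by (rule norm_cauchy_schwarz)
    also have "\<dots> \<le> L * norm (z s - z t) * norm d"
      using lipschitz_onD[OF G, of "z s" "z t"] by (intro mult_right_mono) (auto simp: dist_norm)
    also have "\<dots> = L * (t - s) * (d \<bullet> d)"
    proof -
      have "z s - z t = (s - t) *\<^sub>R d"
        by (simp add: z_def algebra_simps)
      then show ?thesis
        using that by (simp add: power2_norm_eq_inner[symmetric] power2_eq_square)
    qed
    also have "\<dots> = L * (z t \<bullet> d) - L * (z s \<bullet> d)"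
      by (simp add: z_def algebra_simps inner_add_left)
    finally show ?thesis by (simp add: inner_diff_left)
  qed
  show "convex_on UNIV (\<lambda>t. f (x + t *\<^sub>R d) + L / 2 * norm (x + t *\<^sub>R d) ^ 2)"
    using convex_on_realI[OF connected_UNIV deriv mono] by (simp add: z_def)
qed

lemma curvature_boundedI:
  fixes f :: "'a::euclidean_space \<Rightarrow> real"
  assumes "\<And>x. (f has_derivative (\<lambda>v. G x \<bullet> v)) (at x)" "L-lipschitz_on UNIV G"
  shows "curvature_bounded L f"
  using assms convex_on_add_norm_sq_if_lipschitz_gradient[OF assms]
  unfolding curvature_bounded_def by blast

definition locally_lipschitz :: "('a::metric_space \<Rightarrow> 'b::metric_space) \<Rightarrow> bool" where
  "locally_lipschitz f \<longleftrightarrow> (\<forall>x. \<exists>e>0. \<exists>C. C-lipschitz_on (ball x e) f)"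

lemma locally_lipschitz_const: "locally_lipschitz (\<lambda>x. c)"
  unfolding locally_lipschitz_def using lipschitz_on_constant zero_less_one by blast

lemma locally_lipschitz_ident: "locally_lipschitz (\<lambda>x. x)"
  unfolding locally_lipschitz_def using lipschitz_on_id zero_less_one by blast

lemma locally_lipschitz_common_ball:
  assumes "locally_lipschitz f" "locally_lipschitz g"
  obtains e C D where "0 < e" "C-lipschitz_on (ball x e) f" "D-lipschitz_on (ball x e) g"
proof -
  from assms obtain e1 e2 C D where "0 < e1" "C-lipschitz_on (ball x e1) f"
    and "0 < e2" "D-lipschitz_on (ball x e2) g"
    unfolding locally_lipschitz_def by metis
  then show ?thesis
    by (intro that[of "min e1 e2"]) (auto intro: lipschitz_on_subset)
qed

lemma locally_lipschitz_add:
  fixes f g :: "'a::metric_space \<Rightarrow> 'b::real_normed_vector"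
  assumes "locally_lipschitz f" "locally_lipschitz g"
  shows "locally_lipschitz (\<lambda>x. f x + g x)"
  unfolding locally_lipschitz_def
  by (metis locally_lipschitz_common_ball[OF assms] lipschitz_on_add)

lemma locally_lipschitz_diff:
  fixes f g :: "'a::metric_space \<Rightarrow> 'b::real_normed_vector"
  assumes "locally_lipschitz f" "locally_lipschitz g"
  shows "locally_lipschitz (\<lambda>x. f x - g x)"
  unfolding locally_lipschitz_def
  by (metis locally_lipschitz_common_ball[OF assms] lipschitz_on_diff)

lemma locally_lipschitz_compose:
  assumes "locally_lipschitz f" "C-lipschitz_on (range f) h"
  shows "locally_lipschitz (\<lambda>x. h (f x))"
  unfolding locally_lipschitz_def
proof
  fix x
  from assms(1) obtain e D where "0 < e" "D-lipschitz_on (ball x e) f"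
    unfolding locally_lipschitz_def by blast
  moreover have "C-lipschitz_on (f ` ball x e) h"
    using assms(2) by (rule lipschitz_on_subset) auto
  ultimately show "\<exists>e>0. \<exists>C. C-lipschitz_on (ball x e) (\<lambda>x. h (f x))"
    using lipschitz_on_compose2 by blast
qed

lemma (in bounded_linear) locally_lipschitz:
  assumes "locally_lipschitz g"
  shows "locally_lipschitz (\<lambda>x. f (g x))"
proof -
  obtain C where "C-lipschitz_on (range g) f"
    by (rule lipschitz_boundE)
  with assms show ?thesis
    by (rule locally_lipschitz_compose)
qed

lemma lipschitz_on_ball_image:
  assumes "C-lipschitz_on (ball x e) f"
  shows "f ` ball x e \<subseteq> cball (f x) (C * e)"
proof clarify
  fix y assume y: "y \<in> ball x e"
  then have "0 < e"
    using zero_le_dist[of x y] unfolding mem_ball by linarith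
  then have "x \<in> ball x e"
    by simp
  then have "dist (f x) (f y) \<le> C * dist x y"
    using lipschitz_onD[OF assms _ y] by blast
  also have "\<dots> \<le> C * e"
    using y lipschitz_on_nonneg[OF assms] by (intro mult_left_mono) auto
  finally show "f y \<in> cball (f x) (C * e)"
    by simp
qed

lemma (in bounded_bilinear) lipschitz_on_bounded:
  assumes f: "C-lipschitz_on S f" "bounded (f ` S)" and g: "D-lipschitz_on S g" "bounded (g ` S)"
  obtains K where "K-lipschitz_on S (\<lambda>x. prod (f x) (g x))"
proof -
  obtain K where K: "0 < K" "\<And>a b. norm (prod a b) \<le> norm a * norm b * K"
    using pos_bounded by blast
  obtain Bf Bg where Bf: "\<And>x. x \<in> S \<Longrightarrow> norm (f x) \<le> Bf" and Bg: "\<And>x. x \<in> S \<Longrightarrow> norm (g x) \<le> Bg"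
    using f(2) g(2) by (meson bounded_iff imageI)
  have C: "0 \<le> C" and D: "0 \<le> D"
    using f(1) g(1) by (simp_all add: lipschitz_on_nonneg)
  have "(K * (C * \<bar>Bg\<bar> + \<bar>Bf\<bar> * D))-lipschitz_on S (\<lambda>x. prod (f x) (g x))"
  proof (rule lipschitz_onI)
    fix x y assume xy: "x \<in> S" "y \<in> S"
    have df: "norm (f x - f y) \<le> C * dist x y" and dg: "norm (g x - g y) \<le> D * dist x y"
      using lipschitz_onD[OF f(1) xy] lipschitz_onD[OF g(1) xy] by (simp_all add: dist_norm)
    have bg: "norm (g x) \<le> \<bar>Bg\<bar>" and bf: "norm (f y) \<le> \<bar>Bf\<bar>"
      using Bg[OF xy(1)] Bf[OF xy(2)] by linarith+
    have "norm (prod (f x - f y) (g x)) \<le> norm (f x - f y) * norm (g x) * K"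
      by (rule K(2))
    also have "\<dots> \<le> C * dist x y * \<bar>Bg\<bar> * K"
      using df bg C K(1) by (intro mult_right_mono mult_mono) auto
    finally have left: "norm (prod (f x - f y) (g x)) \<le> C * dist x y * \<bar>Bg\<bar> * K" .
    have "norm (prod (f y) (g x - g y)) \<le> norm (f y) * norm (g x - g y) * K"
      by (rule K(2))
    also have "\<dots> \<le> \<bar>Bf\<bar> * (D * dist x y) * K"
      using dg bf K(1) by (intro mult_right_mono mult_mono) auto
    finally have right: "norm (prod (f y) (g x - g y)) \<le> \<bar>Bf\<bar> * (D * dist x y) * K" .
    have "prod (f x) (g x) - prod (f y) (g y) = prod (f x - f y) (g x) + prod (f y) (g x - g y)"
      by (simp add: diff_left diff_right)
    then have "dist (prod (f x) (g x)) (prod (f y) (g y))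
        \<le> norm (prod (f x - f y) (g x)) + norm (prod (f y) (g x - g y))"
      by (simp add: dist_norm norm_triangle_ineq)
    also have "\<dots> \<le> K * (C * \<bar>Bg\<bar> + \<bar>Bf\<bar> * D) * dist x y"
      using left right by (simp add: algebra_simps)
    finally show "dist (prod (f x) (g x)) (prod (f y) (g y)) \<le> K * (C * \<bar>Bg\<bar> + \<bar>Bf\<bar> * D) * dist x y" .
  qed (use K(1) C D in simp)
  then show ?thesis by (rule that)
qed

lemma (in bounded_bilinear) locally_lipschitz:
  assumes "locally_lipschitz f" "locally_lipschitz g"
  shows "locally_lipschitz (\<lambda>x. prod (f x) (g x))"
  unfolding locally_lipschitz_def
proof
  fix x
  obtain e C D where e: "0 < e" and f: "C-lipschitz_on (ball x e) f" and g: "D-lipschitz_on (ball x e) g"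
    using locally_lipschitz_common_ball[OF assms] by blast
  have "bounded (f ` ball x e)" "bounded (g ` ball x e)"
    using lipschitz_on_ball_image[OF f] lipschitz_on_ball_image[OF g]
    by (auto intro: bounded_subset[OF bounded_cball])
  with f g e show "\<exists>e>0. \<exists>K. K-lipschitz_on (ball x e) (\<lambda>x. prod (f x) (g x))"
    by (metis lipschitz_on_bounded)
qed

lemma lipschitz_inverse_sqrt: "1-lipschitz_on {1..} (\<lambda>u. 1 / sqrt u)"
proof (rule lipschitz_onI)
  fix u v :: real assume "u \<in> {1..}" "v \<in> {1..}"
  then have uv: "1 \<le> sqrt u" "1 \<le> sqrt v" by auto
  have "\<bar>1 / sqrt u - 1 / sqrt v\<bar> = \<bar>sqrt u - sqrt v\<bar> / (sqrt u * sqrt v)"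
    using uv by (simp add: field_simps abs_minus_commute)
  also have "\<dots> \<le> \<bar>sqrt u - sqrt v\<bar>"
  proof -
    have "1 \<le> sqrt u * sqrt v"
      using mult_mono[OF uv] uv by simp
    then show ?thesis
      by (simp add: divide_le_eq mult_le_cancel_left1)
  qed
  also have "\<dots> \<le> \<bar>sqrt u - sqrt v\<bar> * (sqrt u + sqrt v)"
  proof -
    have "1 \<le> sqrt u + sqrt v"
      using uv by linarith
    then show ?thesis
      by (simp add: mult_le_cancel_left1)
  qed
  also have "\<dots> = \<bar>(sqrt u - sqrt v) * (sqrt u + sqrt v)\<bar>"
    using uv by (simp add: abs_mult)
  also have "\<dots> = \<bar>u - v\<bar>"
    using uv by (simp add: algebra_simps)
  finally show "dist (1 / sqrt u) (1 / sqrt v) \<le> 1 * dist u v"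
    by (simp add: dist_real_def)
qed simp

lemma inner_matrix: "(A::real^'n^'m) \<bullet> B = (\<Sum>i\<in>UNIV. \<Sum>j\<in>UNIV. A$i$j * B$i$j)"
  by (simp add: inner_vec_def)

lemma inner_transpose: "transpose (A::real^'n^'m) \<bullet> transpose B = A \<bullet> B"
  unfolding inner_matrix transpose_def by (simp, rule sum.swap)

lemma norm_transpose: "norm (transpose (A::real^'n^'m)) = norm A"
  by (simp add: norm_eq_sqrt_inner inner_transpose)

lemma inner_matrix_mult_right: "((A::real^'n^'m) ** (B::real^'p^'n)) \<bullet> C = A \<bullet> (C ** transpose B)"
  unfolding inner_matrix transpose_def matrix_matrix_mult_def
  by (simp add: sum_distrib_left sum_distrib_right mult_ac, rule sum.cong[OF refl], rule sum.swap)

lemma inner_matrix_mult_left: "((A::real^'n^'m) ** (B::real^'p^'n)) \<bullet> C = B \<bullet> (transpose A ** C)"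
proof -
  have "(A ** B) \<bullet> C = (transpose B ** transpose A) \<bullet> transpose C"
    by (metis inner_transpose matrix_transpose_mul)
  also have "\<dots> = transpose B \<bullet> transpose (transpose A ** C)"
    by (simp add: inner_matrix_mult_right matrix_transpose_mul)
  finally show ?thesis by (simp add: inner_transpose)
qed

lemma norm_matrix_mult_le: "norm ((A::real^'n^'m) ** (B::real^'p^'n)) \<le> norm A * norm B"
proof -
  have entry: "(A ** B)$i$j = A$i \<bullet> column j B" for i j
    by (simp add: matrix_matrix_mult_def column_def inner_vec_def)
  have rows: "norm A ^ 2 = (\<Sum>i\<in>UNIV. A$i \<bullet> A$i)"
    by (simp add: power2_norm_eq_inner inner_vec_def)
  have columns: "norm B ^ 2 = (\<Sum>j\<in>UNIV. column j B \<bullet> column j B)"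
    unfolding power2_norm_eq_inner inner_matrix column_def inner_vec_def
    by (simp, rule sum.swap)
  have "norm (A ** B) ^ 2 = (\<Sum>i\<in>UNIV. \<Sum>j\<in>UNIV. (A$i \<bullet> column j B)\<^sup>2)"
    unfolding power2_norm_eq_inner inner_matrix entry by (simp add: power2_eq_square)
  also have "\<dots> \<le> (\<Sum>i\<in>UNIV. \<Sum>j\<in>UNIV. (A$i \<bullet> A$i) * (column j B \<bullet> column j B))"
    by (intro sum_mono Cauchy_Schwarz_ineq)
  also have "\<dots> = (norm A * norm B) ^ 2"
    by (simp add: rows columns power_mult_distrib sum_product)
  finally show ?thesis by (rule power2_le_imp_le) simp
qed

lemma bounded_bilinear_matrix_mult:
  "bounded_bilinear ((**) :: real^'n^'m \<Rightarrow> real^'p^'n \<Rightarrow> real^'p^'m)"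
proof
  fix A A' :: "real^'n^'m" and B B' :: "real^'p^'n" and r :: real
  show "(A + A') ** B = A ** B + A' ** B"
    by (simp add: vec_eq_iff matrix_matrix_mult_def sum.distrib distrib_right)
  show "A ** (B + B') = A ** B + A ** B'" by (rule matrix_add_ldistrib)
  show "(r *\<^sub>R A) ** B = r *\<^sub>R (A ** B)"
    by (simp add: vec_eq_iff matrix_matrix_mult_def sum_distrib_left mult_ac)
  show "A ** (r *\<^sub>R B) = r *\<^sub>R (A ** B)"
    by (simp add: vec_eq_iff matrix_matrix_mult_def sum_distrib_left mult_ac)
next
  show "\<exists>K. \<forall>A B. norm ((A::real^'n^'m) ** (B::real^'p^'n)) \<le> norm A * norm B * K"
    using norm_matrix_mult_le by (metis mult.right_neutral)
qed

interpretation matrix_mult: bounded_bilinear "(**) :: real^'n^'m \<Rightarrow> real^'p^'n \<Rightarrow> real^'p^'m"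
  by (rule bounded_bilinear_matrix_mult)

lemma bounded_linear_transpose: "bounded_linear (transpose :: real^'n^'m \<Rightarrow> real^'m^'n)"
proof
  show "transpose (A + B) = transpose A + transpose B" for A B :: "real^'n^'m"
    by (simp add: vec_eq_iff transpose_def)
  show "transpose (r *\<^sub>R A) = r *\<^sub>R transpose A" for r and A :: "real^'n^'m"
    by (rule transpose_scalar)
  show "\<exists>K. \<forall>A. norm (transpose (A::real^'n^'m)) \<le> norm A * K"
    by (metis norm_transpose mult.right_neutral order_refl)
qed

lemma inner_mat_1: "mat 1 \<bullet> (mat 1 :: real^'n^'n) = CARD('n)"
  by (simp add: inner_matrix mat_def if_distrib if_distribR cong: if_cong)

definition orth_defect :: "real^'n^'n \<Rightarrow> real^'n^'n" where
  "orth_defect R = transpose R ** R - mat 1"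

lemma transpose_orth_defect [simp]: "transpose (orth_defect R) = orth_defect R"
  by (simp add: orth_defect_def matrix_transpose_mul linear_diff[OF bounded_linear.linear[OF bounded_linear_transpose]])

lemma norm_sq_le_orth_defect:
  "norm (R::real^'n^'n) ^ 2 \<le> sqrt CARD('n) * norm (orth_defect R) + CARD('n)"
proof -
  have "norm R ^ 2 = (orth_defect R + mat 1) \<bullet> mat 1"
    by (simp add: orth_defect_def inner_matrix_mult_left power2_norm_eq_inner)
  also have "\<dots> = orth_defect R \<bullet> mat 1 + CARD('n)"
    by (simp add: inner_add_left inner_mat_1)
  also have "orth_defect R \<bullet> mat 1 \<le> norm (orth_defect R) * sqrt CARD('n)"
    using norm_cauchy_schwarz[of "orth_defect R" "mat 1"] by (simp add: norm_eq_sqrt_inner inner_mat_1)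
  finally show ?thesis by (simp add: mult.commute)
qed

lemmas has_derivative_matrix_mult [derivative_intros] = matrix_mult.FDERIV
lemmas has_derivative_transpose [derivative_intros] =
  bounded_linear.has_derivative[OF bounded_linear_transpose]

lemma has_derivative_orth_defect:
  "(orth_defect has_derivative (\<lambda>V. transpose V ** R + transpose R ** V)) (at R)"
  unfolding orth_defect_def[abs_def]
  by (rule has_derivative_eq_rhs, (rule derivative_intros)+) (simp add: fun_eq_iff add.commute)

lemma inner_orth_defect_derivative:
  "orth_defect R \<bullet> (transpose V ** R + transpose R ** V) = 2 * ((R ** orth_defect R) \<bullet> V)"
proof -
  have "orth_defect R \<bullet> (transpose V ** R) = transpose V \<bullet> (orth_defect R ** transpose R)"
    by (subst inner_commute) (rule inner_matrix_mult_right)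
  also have "\<dots> = (R ** orth_defect R) \<bullet> V"
    by (metis inner_commute inner_transpose matrix_transpose_mul transpose_orth_defect transpose_transpose)
  moreover have "orth_defect R \<bullet> (transpose R ** V) = (R ** orth_defect R) \<bullet> V"
    by (subst inner_commute, subst inner_matrix_mult_left) (simp add: inner_commute)
  ultimately show ?thesis by (simp add: inner_add_right)
qed

lemma has_derivative_inner_orth_defect:
  "((\<lambda>R. orth_defect R \<bullet> orth_defect R) has_derivative (\<lambda>V. 4 * ((R ** orth_defect R) \<bullet> V))) (at R)"
  using has_derivative_inner[OF has_derivative_orth_defect has_derivative_orth_defect, of R]
  by (rule has_derivative_eq_rhs) (simp add: fun_eq_iff inner_commute[of _ "orth_defect R"] inner_orth_defect_derivative)

definition hbar_root :: "real \<Rightarrow> real^'n^'n \<Rightarrow> real" where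
  "hbar_root L R = sqrt (3 * L^2 * (orth_defect R \<bullet> orth_defect R) + 1)"

lemma hbar_root_ge_1: "1 \<le> hbar_root L R"
  by (simp add: hbar_root_def)

lemma hbar_root_sq: "hbar_root L R ^ 2 = 3 * L^2 * norm (orth_defect R) ^ 2 + 1"
  by (simp add: hbar_root_def power2_norm_eq_inner)

lemma hbar_eq_root: "hbar L R = L * hbar_root L R - L"
  by (simp add: hbar_def gfun_def hbar_root_def orth_defect_def power2_norm_eq_inner)

lemma has_derivative_hbar_root:
  "(hbar_root L has_derivative (\<lambda>V. 6 * L^2 * ((R ** orth_defect R) \<bullet> V) / hbar_root L R)) (at R)"
proof -
  have pos: "0 < 3 * L^2 * (orth_defect R \<bullet> orth_defect R) + 1"
    by (simp add: add_nonneg_pos)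
  show ?thesis
    using DERIV_compose_FDERIV[OF DERIV_real_sqrt[OF pos]
        has_derivative_add[OF has_derivative_mult_right[OF has_derivative_inner_orth_defect] has_derivative_const]]
    unfolding hbar_root_def[abs_def]
    by (rule has_derivative_eq_rhs) (simp add: fun_eq_iff field_simps)
qed

definition hbar_grad :: "real \<Rightarrow> real^'n^'n \<Rightarrow> real^'n^'n" where
  "hbar_grad L R = (6 * L^3 / hbar_root L R) *\<^sub>R (R ** orth_defect R)"

definition hbar_hess :: "real \<Rightarrow> real^'n^'n \<Rightarrow> real^'n^'n \<Rightarrow> real^'n^'n" where
  "hbar_hess L R V =
     (6 * L^3 / hbar_root L R) *\<^sub>R (V ** orth_defect R + R ** (transpose V ** R + transpose R ** V))
     - (36 * L^5 / hbar_root L R ^ 3 * ((R ** orth_defect R) \<bullet> V)) *\<^sub>R (R ** orth_defect R)"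

lemma has_derivative_hbar: "(hbar L has_derivative (\<lambda>V. hbar_grad L R \<bullet> V)) (at R)"
  unfolding hbar_eq_root[abs_def]
  by (rule has_derivative_eq_rhs, (rule derivative_eq_intros has_derivative_hbar_root | simp)+)
     (simp add: fun_eq_iff hbar_grad_def field_simps power2_eq_square power3_eq_cube)

lemma has_derivative_hbar_grad: "(hbar_grad L has_derivative hbar_hess L R) (at R)"
proof -
  have root: "hbar_root L R \<noteq> 0"
    using hbar_root_ge_1[of L R] by linarith
  have "((\<lambda>R. R ** orth_defect R) has_derivative
      (\<lambda>V. V ** orth_defect R + R ** (transpose V ** R + transpose R ** V))) (at R)"
    by (rule has_derivative_eq_rhs, (rule derivative_intros has_derivative_orth_defect)+)
       (simp add: fun_eq_iff add.commute)
  with has_derivative_divide[OF has_derivative_const has_derivative_hbar_root root, of "6 * L^3"]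
  show ?thesis
    unfolding hbar_grad_def[abs_def] hbar_hess_def[abs_def]
    by (rule has_derivative_eq_rhs[OF has_derivative_scaleR])
       (simp add: fun_eq_iff field_simps eval_nat_numeral)
qed

lemma bounded_linear_hbar_hess: "bounded_linear (hbar_hess L R)"
  using has_derivative_hbar_grad by (rule has_derivative_bounded_linear)

lemma blinfun_apply_Blinfun_hbar_hess [simp]: "blinfun_apply (Blinfun (hbar_hess L R)) = hbar_hess L R"
  by (rule bounded_linear_Blinfun_apply[OF bounded_linear_hbar_hess])

lemma hbar_hess_coeff_bound:
  fixes L m r s :: real
  assumes L: "0 < L" and m: "0 \<le> m" and r: "r \<le> 2 * m + 3"
    and s: "s\<^sup>2 = 3 * L^2 * m^2 + 1" "1 \<le> s"
  shows "6 * L^3 / s * (m + 2 * r) + 36 * L^5 / s^3 * (r * m^2) \<le> 100 * L^2 + 100 * L^3"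
proof -
  have Lm: "L * m \<le> s"
    by (rule power2_le_imp_le) (use s L in \<open>simp_all add: power_mult_distrib\<close>)
  have mL: "6 * L^3 * m / s \<le> 6 * L^2"
    using mult_left_mono[OF Lm, of "6 * L^2"] L s by (simp add: divide_le_eq power2_eq_square power3_eq_cube mult_ac)
  have inv: "6 * L^3 / s \<le> 6 * L^3"
    using L s by (simp add: divide_le_eq)
  have ratio: "3 * L^2 * m^2 / s^2 \<le> 1"
    using s by (simp add: divide_le_eq add_nonneg_pos)
  have first: "6 * L^3 / s * (m + 2 * r) \<le> 30 * L^2 + 36 * L^3"
  proof -
    have "6 * L^3 / s * (m + 2 * r) \<le> 6 * L^3 / s * (5 * m + 6)"
      using r L s by (intro mult_left_mono) auto
    also have "\<dots> = 5 * (6 * L^3 * m / s) + 6 * (6 * L^3 / s)"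
      by (simp add: ring_distribs mult_ac add_divide_distrib)
    finally show ?thesis using mL inv by linarith
  qed
  have second: "36 * L^5 / s^3 * (r * m^2) \<le> 24 * L^2 + 36 * L^3"
  proof -
    have "36 * L^5 / s^3 * (r * m^2) \<le> 36 * L^5 / s^3 * ((2 * m + 3) * m^2)"
      using r L s by (intro mult_left_mono mult_right_mono) auto
    also have "\<dots> = 2 * (3 * L^2 * m^2 / s^2) * (2 * (6 * L^3 * m / s) + 3 * (6 * L^3 / s))"
      using s by (simp add: field_simps eval_nat_numeral)
    also have "\<dots> \<le> 2 * 1 * (2 * (6 * L^2) + 3 * (6 * L^3))"
      using ratio mL inv L m s by (intro mult_mono mult_left_mono add_mono) auto
    finally show ?thesis by simp
  qed
  have "0 \<le> L^2" "0 \<le> L^3"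
    using L by simp_all
  then show ?thesis
    using first second by linarith
qed

lemma norm_hbar_hess_le:
  assumes L: "0 < L"
  shows "norm (hbar_hess L (R::real^3^3) V) \<le> (100 * L^2 + 100 * L^3) * norm V"
proof -
  define m where "m = norm (orth_defect R)"
  define r where "r = norm R ^ 2"
  define s where "s = hbar_root L R"
  have s: "s\<^sup>2 = 3 * L^2 * m^2 + 1" "1 \<le> s"
    by (simp_all add: s_def m_def hbar_root_sq hbar_root_ge_1)
  have r: "r \<le> 2 * m + 3"
  proof -
    have "sqrt (real CARD(3)) \<le> 2"
      using real_sqrt_le_mono[of 3 4] by simp
    then show ?thesis
      using norm_sq_le_orth_defect[of R] mult_right_mono[of "sqrt 3" 2 m] by (simp add: r_def m_def)
  qed
  have norm_R_mult: "norm (R ** (A ** B)) \<le> r * norm V"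
    if "norm A * norm B = norm R * norm V" for A B
  proof -
    have "norm (R ** (A ** B)) \<le> norm R * (norm A * norm B)"
      by (meson norm_matrix_mult_le mult_left_mono norm_ge_zero order_trans)
    then show ?thesis
      using that by (simp add: r_def power2_eq_square mult_ac)
  qed
  have linear_part:
    "norm (V ** orth_defect R + R ** (transpose V ** R + transpose R ** V)) \<le> (m + 2 * r) * norm V"
  proof -
    have "norm (V ** orth_defect R + R ** (transpose V ** R + transpose R ** V))
        \<le> norm (V ** orth_defect R) + norm (R ** (transpose V ** R)) + norm (R ** (transpose R ** V))"
      using norm_triangle_ineq[of "V ** orth_defect R" "R ** (transpose V ** R) + R ** (transpose R ** V)"]
        norm_triangle_ineq[of "R ** (transpose V ** R)" "R ** (transpose R ** V)"]
      by (simp add: matrix_add_ldistrib)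
    also have "\<dots> \<le> m * norm V + r * norm V + r * norm V"
    proof (intro add_mono)
      show "norm (V ** orth_defect R) \<le> m * norm V"
        using norm_matrix_mult_le[of V "orth_defect R"] by (simp add: m_def mult.commute)
      show "norm (R ** (transpose V ** R)) \<le> r * norm V"
        by (rule norm_R_mult) (simp add: norm_transpose mult.commute)
      show "norm (R ** (transpose R ** V)) \<le> r * norm V"
        by (rule norm_R_mult) (simp add: norm_transpose)
    qed
    finally show ?thesis
      by (simp add: algebra_simps)
  qed
  have rank_one_part: "norm (((R ** orth_defect R) \<bullet> V) *\<^sub>R (R ** orth_defect R)) \<le> r * m^2 * norm V"
  proof -
    have "norm (R ** orth_defect R) ^ 2 \<le> r * m^2"
      using power_mono[OF norm_matrix_mult_le[of R "orth_defect R"]]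
      by (simp add: r_def m_def power_mult_distrib)
    moreover have "norm (((R ** orth_defect R) \<bullet> V) *\<^sub>R (R ** orth_defect R)) \<le> norm (R ** orth_defect R) ^ 2 * norm V"
      using mult_right_mono[OF Cauchy_Schwarz_ineq2[of "R ** orth_defect R" V] norm_ge_zero[of "R ** orth_defect R"]]
      by (simp add: power2_eq_square mult_ac)
    ultimately show ?thesis
      by (meson mult_right_mono norm_ge_zero order_trans)
  qed
  have coeffs: "0 \<le> 6 * L^3 / s" "0 \<le> 36 * L^5 / s^3"
    using L s by simp_all
  have "hbar_hess L R V = (6 * L^3 / s) *\<^sub>R (V ** orth_defect R + R ** (transpose V ** R + transpose R ** V))
      - (36 * L^5 / s^3) *\<^sub>R (((R ** orth_defect R) \<bullet> V) *\<^sub>R (R ** orth_defect R))"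
    by (simp add: hbar_hess_def s_def)
  then have "norm (hbar_hess L R V)
      \<le> 6 * L^3 / s * norm (V ** orth_defect R + R ** (transpose V ** R + transpose R ** V))
        + 36 * L^5 / s^3 * norm (((R ** orth_defect R) \<bullet> V) *\<^sub>R (R ** orth_defect R))"
    using norm_triangle_ineq4 coeffs by (metis abs_of_nonneg norm_scaleR)
  also have "\<dots> \<le> 6 * L^3 / s * ((m + 2 * r) * norm V) + 36 * L^5 / s^3 * (r * m^2 * norm V)"
    using linear_part rank_one_part coeffs by (intro add_mono mult_left_mono)
  also have "\<dots> = (6 * L^3 / s * (m + 2 * r) + 36 * L^5 / s^3 * (r * m^2)) * norm V"
    by (simp add: algebra_simps add_divide_distrib)
  also have "\<dots> \<le> (100 * L^2 + 100 * L^3) * norm V"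
    using hbar_hess_coeff_bound[OF L _ r s] by (intro mult_right_mono) (simp_all add: m_def)
  finally show ?thesis .
qed

lemma lipschitz_hbar_grad:
  assumes "0 < L"
  shows "(100 * L^2 + 100 * L^3)-lipschitz_on UNIV (hbar_grad L :: real^3^3 \<Rightarrow> real^3^3)"
  using assms
  by (intro bounded_derivative_imp_lipschitz[where f' = "hbar_hess L"] onorm_le norm_hbar_hess_le)
     (auto intro: has_derivative_at_withinI has_derivative_hbar_grad)

lemma locally_lipschitz_orth_defect: "locally_lipschitz orth_defect"
  unfolding orth_defect_def[abs_def]
  by (intro locally_lipschitz_diff locally_lipschitz_const matrix_mult.locally_lipschitz
      bounded_linear.locally_lipschitz[OF bounded_linear_transpose] locally_lipschitz_ident)

lemma locally_lipschitz_inverse_hbar_root: "locally_lipschitz (\<lambda>R. 1 / hbar_root L R)"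
proof -
  have "locally_lipschitz (\<lambda>R. 3 * L^2 * (orth_defect R \<bullet> orth_defect R) + 1)"
    by (intro locally_lipschitz_add locally_lipschitz_const locally_lipschitz_orth_defect
        bounded_bilinear.locally_lipschitz[OF bounded_bilinear_mult]
        bounded_bilinear.locally_lipschitz[OF bounded_bilinear_inner])
  then show ?thesis
    unfolding hbar_root_def
    by (rule locally_lipschitz_compose[OF _ lipschitz_on_subset[OF lipschitz_inverse_sqrt]]) auto
qed

lemma curvature_bounded_hbar:
  "0 < L \<Longrightarrow> curvature_bounded (100 * L^2 + 100 * L^3) (hbar L)"
  by (rule curvature_boundedI[OF has_derivative_hbar lipschitz_hbar_grad])

lemma Blinfun_hbar_hess:
  "Blinfun (hbar_hess L R) =
     (6 * L^3 * (1 / hbar_root L R)) *\<^sub>R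
       (matrix_mult.prod_left (orth_defect R) + (matrix_mult.prod_right R o\<^sub>L
         ((matrix_mult.prod_left R o\<^sub>L Blinfun transpose) + matrix_mult.prod_right (transpose R))))
   - (36 * L^5 * (1 / hbar_root L R * (1 / hbar_root L R) * (1 / hbar_root L R))) *\<^sub>R
       (blinfun_scaleR_left (R ** orth_defect R) o\<^sub>L blinfun_inner_right (R ** orth_defect R))"
  by (rule blinfun_eqI)
     (simp add: hbar_hess_def bounded_linear_Blinfun_apply[OF bounded_linear_transpose] blinfun.bilinear_simps
       matrix_add_ldistrib power3_eq_cube)

lemma locally_lipschitz_Blinfun_hbar_hess: "locally_lipschitz (\<lambda>R. Blinfun (hbar_hess L R))"
  unfolding Blinfun_hbar_hess
  by (intro locally_lipschitz_diff locally_lipschitz_add locally_lipschitz_const locally_lipschitz_ident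
      locally_lipschitz_orth_defect locally_lipschitz_inverse_hbar_root
      bounded_bilinear.locally_lipschitz[OF bounded_bilinear_scaleR]
      bounded_bilinear.locally_lipschitz[OF bounded_bilinear_mult]
      bounded_bilinear.locally_lipschitz[OF bounded_bilinear_blinfun_compose]
      matrix_mult.locally_lipschitz
      bounded_linear.locally_lipschitz[OF matrix_mult.bounded_linear_prod_left]
      bounded_linear.locally_lipschitz[OF matrix_mult.bounded_linear_prod_right]
      bounded_linear.locally_lipschitz[OF bounded_linear_blinfun_scaleR_left]
      bounded_linear.locally_lipschitz[OF bounded_linear_blinfun_inner_right]
      bounded_linear.locally_lipschitz[OF bounded_linear_transpose])

lemma gfun_mono_abs:
  assumes "0 < L" "\<bar>x\<bar> \<le> \<bar>y\<bar>"
  shows "gfun L x \<le> gfun L y"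
proof -
  have "x^2 \<le> y^2"
    using assms(2) by (simp add: abs_le_square_iff)
  then show ?thesis
    using assms(1) by (simp add: gfun_def)
qed

lemma gfun_nonneg: "0 < L \<Longrightarrow> 0 \<le> gfun L x"
  by (simp add: gfun_def)

lemma gfun_0 [simp]: "gfun L 0 = 0"
  by (simp add: gfun_def)

lemma gfun_inverse:
  assumes "0 < L" "\<bar>x\<bar> = 1 / L"
  shows "gfun L x = L"
proof -
  have "x^2 = 1 / L^2"
    using assms(2) by (metis power2_abs power_one_over)
  then have four: "3 * L^2 * x^2 + 1 = 4"
    using assms(1) by simp
  show ?thesis
    unfolding gfun_def four by simp
qed

theorem corollary2:
  shows "(\<exists>q :: real poly. \<forall>L2>0. curvature_bounded (poly q L2) (hbar L2))
    \<and> (\<forall>L2>0. \<exists>G :: real^3^3 \<Rightarrow> real^3^3.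
          (\<forall>R. (hbar L2 has_derivative (\<lambda>v. G R \<bullet> v)) (at R)) \<and>
          (\<forall>R. G differentiable (at R)))
    \<and> (\<forall>L2>0. \<exists>(G :: real^3^3 \<Rightarrow> real^3^3) (H :: real^3^3 \<Rightarrow> ((real^3^3) \<Rightarrow>\<^sub>L (real^3^3))).
          (\<forall>R. (hbar L2 has_derivative (\<lambda>v. G R \<bullet> v)) (at R)) \<and>
          (\<forall>R. (G has_derivative blinfun_apply (H R)) (at R)) \<and>
          (\<forall>R. \<exists>e>0. \<exists>C. C-lipschitz_on (ball R e) H))
    \<and> (\<forall>L2>0. (\<forall>x y. \<bar>x\<bar> \<le> \<bar>y\<bar> \<longrightarrow> gfun L2 x \<le> gfun L2 y)
          \<and> (\<forall>x. 0 \<le> gfun L2 x) \<and> (\<exists>x. gfun L2 x = 0)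
          \<and> (\<forall>x. \<bar>x\<bar> = 1 / L2 \<longrightarrow> gfun L2 x = L2))"
proof -
  have "poly [:0, 0, 100, 100:] L = 100 * L^2 + 100 * L^3" for L :: real
    by (simp add: algebra_simps power2_eq_square power3_eq_cube)
  then have "\<forall>L>0. curvature_bounded (poly [:0, 0, 100, 100:] L) (hbar L)"
    using curvature_bounded_hbar by simp
  moreover have "\<exists>G. (\<forall>R. (hbar L has_derivative (\<lambda>v. G R \<bullet> v)) (at R)) \<and> (\<forall>R. G differentiable (at R))"
    for L
    using has_derivative_hbar has_derivative_hbar_grad by (blast intro: differentiableI)
  moreover have "\<exists>G H. (\<forall>R. (hbar L has_derivative (\<lambda>v. G R \<bullet> v)) (at R))
      \<and> (\<forall>R. (G has_derivative blinfun_apply (H R)) (at R))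
      \<and> (\<forall>R. \<exists>e>0. \<exists>C. C-lipschitz_on (ball R e) H)" for L
  proof (intro exI conjI)
    show "\<forall>R. (hbar L has_derivative (\<lambda>v. hbar_grad L R \<bullet> v)) (at R)"
      using has_derivative_hbar by blast
    show "\<forall>R. (hbar_grad L has_derivative blinfun_apply (Blinfun (hbar_hess L R))) (at R)"
      by (simp add: has_derivative_hbar_grad)
    show "\<forall>R. \<exists>e>0. \<exists>C. C-lipschitz_on (ball R e) (\<lambda>R. Blinfun (hbar_hess L R))"
      using locally_lipschitz_Blinfun_hbar_hess unfolding locally_lipschitz_def .
  qed
  ultimately show ?thesis
    using gfun_mono_abs gfun_nonneg gfun_0 gfun_inverse by blast
qed

end
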